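(* Let $p$ be a prime and let $e\geq 2$ and $d\geq 3$ be integers. Let $\mathcal P(p^e,d)\subset\mathbb R^d$ be the convex hull of all $d$-dimensional vector-factorisations of $p^e$. Then the set of all facets of $\mathcal P(p^e,d)$ is exactly the set of convex hulls of the following finite sets: (1) $\{(p^e,1,\dots,1),(1,p^e,1,\dots,1),\dots,(1,\dots,1,p^e)\}$; (2) for each $i=1,\dots,d$, the set $\{(p^{\beta_1},\dots,p^{\beta_d})\ :\ (\beta_1,\dots,\beta_d)\in\mathbb N^d,\ \beta_i=0,\ \sum_{j=1}^d\beta_j=e\}$; (3) for each $\lambda\in\{1,\dots,\min(e,d-1)\}$ and each $d$-dimensional vector-factorisation $(p^{\beta_1},\dots,p^{\beta_d})$ of $p^{e-\lambda}$, the set $\{(p^{\beta_1+\epsilon_1},\dots,p^{\beta_d+\epsilon_d})\ :\ (\epsilon_1,\dots,\epsilon_d)\in\{0,1\}^d,\ \sum_{i=1}^d\epsilon_i=\lambda\}$.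
   Context: $\mathbb N=\{0,1,2,\dots\}$. A $d$-dimensional vector-factorisation of an integer $N\geq1$ is an integral vector $(v_1,\dots,v_d)\in\mathbb N^d$ with $v_1v_2\cdots v_d=N$. A facet of a $d$-dimensional polytope is a face of dimension $d-1$. *)

theory Defs
  imports "HOL-Analysis.Analysis"
begin

text \<open>The d-dimensional vector-factorisations of N, as points of real^'n
  (d = CARD('n)): vectors with entries in the naturals whose product is N.\<close>
definition vec_factorisations :: "nat \<Rightarrow> (real^'n) set" where
  "vec_factorisations N = {v. (\<forall>i. v $ i \<in> \<nat>) \<and> (\<Prod>i\<in>UNIV. v $ i) = real N}"

definition factorisation_polytope :: "nat \<Rightarrow> (real^'n) set" where
  "factorisation_polytope N = convex hull (vec_factorisations N)"

end

theory Submission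
  imports Defs "HOL-Computational_Algebra.Primes"
begin

text \<open>The vector-factorisations of \<open>p^e\<close> are the points \<open>p^g = (p^g\<^sub>1, \<dots>, p^g\<^sub>d)\<close> with \<open>g\<close>
  a composition of \<open>e\<close> into \<open>d\<close> non-negative parts. Every facet is the set of points of the
  polytope maximising some linear functional \<open>a\<close>, and the compositions maximising \<open>a \<bullet> p^g\<close>
  are controlled by exchanging units between two coordinates: a positive entry of \<open>a\<close> attracts
  all of \<open>e\<close> to one coordinate (facet (1)); a zero entry empties the negative coordinates
  (facet (2)); if all entries are negative, any two maximisers differ by at most one in each
  coordinate, hence lie in a layer \<open>\<beta> + {0,1}^d\<close> (facet (3)). Conversely each listed set is the
  set of maximisers of an explicit functional; for (3) take \<open>a\<^sub>j = -p^-\<beta>\<^sub>j\<close> and use that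
  \<open>p^x / p^b \<ge> 1 + (p - 1)(x - b)\<close>, with equality exactly for \<open>x \<in> {b, b + 1}\<close>. Since no listed
  set contains another, the faces they span are precisely the maximal proper faces.\<close>

definition maximisers :: "('a \<Rightarrow> 'b::linorder) \<Rightarrow> 'a set \<Rightarrow> 'a set" where
  "maximisers f S = {x \<in> S. \<forall>y\<in>S. f y \<le> f x}"

lemma maximisers_nonempty:
  assumes "finite S" "S \<noteq> {}"
  shows "maximisers f S \<noteq> {}"
proof -
  have "Max (f ` S) \<in> f ` S"
    using assms by simp
  then obtain x where "x \<in> S" "f x = Max (f ` S)"
    by auto
  moreover have "f y \<le> Max (f ` S)" if "y \<in> S" for y
    using assms(1) that by simp
  ultimately show ?thesis
    by (auto simp: maximisers_def)
qed

lemma image_maximisers: "h ` maximisers (\<lambda>x. f (h x)) S = maximisers f (h ` S)"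
  by (auto simp: maximisers_def)

lemma maximisers_eq_level_set:
  assumes le: "\<forall>y\<in>S. f y \<le> c" and x: "x \<in> S" "f x = c"
  shows "maximisers f S = {y \<in> S. f y = c}"
proof (intro equalityI subsetI)
  fix y assume "y \<in> maximisers f S"
  then have "y \<in> S" "c \<le> f y"
    using x by (auto simp: maximisers_def)
  then show "y \<in> {y \<in> S. f y = c}"
    using le order.antisym[of "f y" c] by simp
next
  fix y assume "y \<in> {y \<in> S. f y = c}"
  then show "y \<in> maximisers f S"
    using le by (simp add: maximisers_def)
qed

lemma maximisers_eq_of_constant:
  assumes "maximisers f S \<subseteq> T" "T \<subseteq> S" "\<forall>x\<in>T. \<forall>y\<in>T. f x = f y"
    and "maximisers f S \<noteq> {}"
  shows "maximisers f S = T"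
proof (intro equalityI subsetI)
  fix x assume "x \<in> T"
  obtain m where m: "m \<in> maximisers f S"
    using assms(4) by blast
  then have "f m = f x"
    using assms(1,3) \<open>x \<in> T\<close> by blast
  then show "x \<in> maximisers f S"
    using m \<open>x \<in> T\<close> assms(2) by (auto simp: maximisers_def)
qed (use assms(1) in blast)

section \<open>Faces spanned by maximisers of a linear functional\<close>

lemma convex_hull_subset_halfspace_maximiser:
  assumes "v \<in> maximisers (inner a) V"
  shows "convex hull V \<subseteq> {x. a \<bullet> x \<le> a \<bullet> v}"
  using assms by (intro hull_minimal) (auto simp: maximisers_def convex_halfspace_le)

lemma convex_hull_maximisers:
  fixes V :: "'a::euclidean_space set"
  assumes "finite V" and v: "v \<in> maximisers (inner a) V"
  shows "convex hull (maximisers (inner a) V) = convex hull V \<inter> {x. a \<bullet> x = a \<bullet> v}"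
proof (rule equalityI)
  have "maximisers (inner a) V \<subseteq> convex hull V \<inter> {x. a \<bullet> x = a \<bullet> v}"
  proof
    fix w assume w: "w \<in> maximisers (inner a) V"
    then have "a \<bullet> v \<le> a \<bullet> w" "a \<bullet> w \<le> a \<bullet> v"
      using v by (auto simp: maximisers_def)
    then show "w \<in> convex hull V \<inter> {x. a \<bullet> x = a \<bullet> v}"
      using w hull_inc[of w V] by (auto simp: maximisers_def)
  qed
  then show "convex hull (maximisers (inner a) V) \<subseteq> convex hull V \<inter> {x. a \<bullet> x = a \<bullet> v}"
    by (intro hull_minimal) (simp_all add: convex_Int convex_hyperplane)
  have "(convex hull V \<inter> {x. a \<bullet> x = a \<bullet> v}) face_of convex hull V"
    using convex_hull_subset_halfspace_maximiser[OF v]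
    by (intro face_of_Int_supporting_hyperplane_le) auto
  then obtain S where S: "S \<subseteq> V" "convex hull V \<inter> {x. a \<bullet> x = a \<bullet> v} = convex hull S"
    by (rule face_of_convex_hull_subset[OF finite_imp_compact[OF assms(1)]])
  have "S \<subseteq> maximisers (inner a) V"
  proof
    fix w assume "w \<in> S"
    then have "w \<in> V" "a \<bullet> w = a \<bullet> v"
      using S hull_inc[of w S] by auto
    then show "w \<in> maximisers (inner a) V"
      using v by (auto simp: maximisers_def)
  qed
  then show "convex hull V \<inter> {x. a \<bullet> x = a \<bullet> v} \<subseteq> convex hull (maximisers (inner a) V)"
    unfolding S(2) by (rule hull_mono)
qed

lemma face_of_convex_hull_maximisers:
  fixes V :: "'a::euclidean_space set"
  assumes "finite V"
  shows "convex hull (maximisers (inner a) V) face_of convex hull V"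
proof (cases "V = {}")
  case True
  then show ?thesis by (simp add: maximisers_def)
next
  case False
  then obtain v where v: "v \<in> maximisers (inner a) V"
    using maximisers_nonempty[OF assms] by blast
  show ?thesis
    unfolding convex_hull_maximisers[OF assms v]
    using convex_hull_subset_halfspace_maximiser[OF v]
    by (intro face_of_Int_supporting_hyperplane_le) auto
qed

lemma maximiser_of_mem_convex_hull_maximisers:
  fixes V :: "'a::euclidean_space set"
  assumes "finite V" "w \<in> V" "w \<in> convex hull (maximisers (inner a) V)"
  shows "w \<in> maximisers (inner a) V"
proof -
  have "maximisers (inner a) V \<noteq> {}"
    using assms(3) by auto
  then obtain v where v: "v \<in> maximisers (inner a) V" by blast
  then have "a \<bullet> w = a \<bullet> v"
    using assms(3) convex_hull_maximisers[OF assms(1) v] by auto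
  then show ?thesis
    using v assms(2) by (auto simp: maximisers_def)
qed

lemma facet_of_convex_hull_finite:
  fixes V :: "'a::euclidean_space set"
  assumes "finite V" and F: "F facet_of convex hull V"
  obtains a where "a \<noteq> 0" "F = convex hull (maximisers (inner a) V)"
proof -
  have "polyhedron (convex hull V)"
    by (intro polytope_imp_polyhedron polytope_convex_hull assms(1))
  then obtain a b where a: "a \<noteq> 0" and le: "convex hull V \<subseteq> {x. a \<bullet> x \<le> b}"
    and F_eq: "F = convex hull V \<inter> {x. a \<bullet> x = b}"
    using F by (rule facet_of_polyhedron)
  obtain x where x: "x \<in> F"
    using F by (auto simp: facet_of_def)
  then have "V \<noteq> {}"
    using F_eq by auto
  then obtain v where v: "v \<in> maximisers (inner a) V"
    using maximisers_nonempty[OF assms(1)] by blast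
  have "a \<bullet> v \<le> b"
    using le v hull_inc[of v V] by (auto simp: maximisers_def)
  moreover have "b \<le> a \<bullet> v"
    using x F_eq convex_hull_subset_halfspace_maximiser[OF v] by auto
  ultimately have "F = convex hull V \<inter> {x. a \<bullet> x = a \<bullet> v}"
    using F_eq by simp
  then show ?thesis
    using that a convex_hull_maximisers[OF assms(1) v] by simp
qed

lemma facet_of_subset_face_eq:
  fixes S :: "'a::euclidean_space set"
  assumes "convex S" "F facet_of S" "G face_of S" "G \<noteq> S" "F \<subseteq> G"
  shows "F = G"
proof (rule ccontr)
  assume "F \<noteq> G"
  have "F face_of G"
    using face_of_subset facet_of_imp_face_of[OF assms(2)] assms(5) face_of_imp_subset[OF assms(3)] .
  then have "aff_dim F < aff_dim G"
    using face_of_aff_dim_lt[OF face_of_imp_convex[OF assms(3)]] \<open>F \<noteq> G\<close> by blast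
  moreover have "aff_dim G < aff_dim S"
    using face_of_aff_dim_lt[OF assms(1,3,4)] .
  ultimately show False
    using assms(2) by (simp add: facet_of_def)
qed

section \<open>Compositions and exponent vectors\<close>

definition compositions :: "nat \<Rightarrow> ('n::finite \<Rightarrow> nat) set" where
  "compositions e = {g. sum g UNIV = e}"

definition exp_vec :: "nat \<Rightarrow> ('n::finite \<Rightarrow> nat) \<Rightarrow> real^'n" where
  "exp_vec p g = (\<chi> j. real p ^ g j)"

lemma finite_compositions: "finite (compositions e :: ('n::finite \<Rightarrow> nat) set)"
proof (rule finite_subset)
  show "compositions e \<subseteq> Pi\<^sub>E (UNIV :: 'n set) (\<lambda>_. {..e})"
    unfolding compositions_def PiE_UNIV_domain
    by (auto simp: Pi_def intro: member_le_sum[of _ UNIV, simplified])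
qed (rule finite_PiE; simp)

lemma inj_exp_vec:
  assumes "p \<ge> 2"
  shows "inj (exp_vec p :: ('n::finite \<Rightarrow> nat) \<Rightarrow> real^'n)"
  using assms by (auto intro!: injI simp: exp_vec_def vec_eq_iff fun_eq_iff power_inject_exp)

lemma inner_exp_vec: "a \<bullet> exp_vec p g = (\<Sum>k\<in>UNIV. a$k * real p ^ g k)"
  by (simp add: inner_vec_def exp_vec_def)

lemma vec_factorisations_prime_power:
  assumes "prime p"
  shows "vec_factorisations (p ^ k) = (exp_vec p ` compositions k :: (real^'n::finite) set)"
proof (rule equalityI; rule subsetI)
  fix v :: "real^'n" assume "v \<in> vec_factorisations (p ^ k)"
  then have nat: "\<forall>i. v $ i \<in> \<nat>" and prod: "(\<Prod>i\<in>UNIV. v $ i) = real (p ^ k)"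
    by (auto simp: vec_factorisations_def)
  have "\<forall>i. \<exists>m. v $ i = real m"
    using nat by (metis Nats_cases)
  then obtain n where n: "\<And>i. v $ i = real (n i)"
    by metis
  have prod_n: "(\<Prod>i\<in>UNIV. n i) = p ^ k"
    using prod by (simp add: n flip: of_nat_prod)
  have "\<exists>m. n i = p ^ m" for i
    using divides_primepow_nat[OF assms] dvd_prodI[of UNIV i n] prod_n by auto
  then obtain g where g: "\<And>i. n i = p ^ g i" by metis
  have "p ^ sum g UNIV = p ^ k"
    using prod_n by (simp add: g power_sum)
  then have "g \<in> compositions k"
    using prime_gt_1_nat[OF assms] by (simp add: compositions_def power_inject_exp)
  moreover have "v = exp_vec p g"
    by (simp add: vec_eq_iff exp_vec_def n g)
  ultimately show "v \<in> exp_vec p ` compositions k" by blast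
next
  fix v :: "real^'n" assume "v \<in> exp_vec p ` compositions k"
  then show "v \<in> vec_factorisations (p ^ k)"
    by (auto simp: vec_factorisations_def exp_vec_def compositions_def power_sum
        simp flip: of_nat_power)
qed

lemma power_vector_in_vec_factorisations_iff:
  assumes "prime p"
  shows "(\<chi> j. real p ^ \<beta> j) \<in> (vec_factorisations (p ^ k) :: (real^'n::finite) set)
     \<longleftrightarrow> sum \<beta> UNIV = k"
proof -
  have "(\<chi> j. real p ^ \<beta> j) = (exp_vec p \<beta> :: real^'n)"
    by (simp add: exp_vec_def)
  then show ?thesis
    unfolding vec_factorisations_prime_power[OF assms]
    by (simp add: inj_image_mem_iff[OF inj_exp_vec[OF prime_ge_2_nat[OF assms]]] compositions_def)
qed

section \<open>Exchanging units between two coordinates\<close>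

abbreviation top_exponents :: "nat \<Rightarrow> nat \<Rightarrow> real^'n::finite \<Rightarrow> ('n \<Rightarrow> nat) set" where
  "top_exponents p e a \<equiv> maximisers (\<lambda>g. a \<bullet> exp_vec p g) (compositions e)"

lemma sum_update2:
  assumes "finite A" "i \<in> A" "j \<in> A" "i \<noteq> j"
  shows "sum ((g :: 'a \<Rightarrow> 'b::comm_monoid_add)(i := x, j := y)) A + g i + g j = sum g A + x + y"
proof -
  have split: "sum h A = h i + (h j + sum h (A - {i} - {j}))" for h :: "'a \<Rightarrow> 'b"
  proof -
    have "sum h A = h i + sum h (A - {i})"
      using assms by (intro sum.remove) auto
    also have "sum h (A - {i}) = h j + sum h (A - {i} - {j})"
      using assms by (intro sum.remove) auto
    finally show ?thesis .
  qed
  have "sum (g(i := x, j := y)) (A - {i} - {j}) = sum g (A - {i} - {j})"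
    by (rule sum.cong) auto
  then have "sum (g(i := x, j := y)) A = x + (y + sum g (A - {i} - {j}))"
    using split[of "g(i := x, j := y)"] assms(4) by simp
  then show ?thesis
    unfolding split[of g] by (simp add: ac_simps)
qed

lemma update2_in_compositions:
  assumes "i \<noteq> j" "g \<in> compositions e" "x + y = g i + g j"
  shows "g(i := x, j := y) \<in> compositions e"
  using sum_update2[of UNIV i j g x y] assms by (simp add: compositions_def)

lemma top_exponents_exchange:
  assumes g: "g \<in> top_exponents p e a" and "i \<noteq> j" "x + y = g i + g j"
  shows "a$i * real p ^ x + a$j * real p ^ y \<le> a$i * real p ^ g i + a$j * real p ^ g j"
proof -
  let ?t = "\<lambda>h k. a$k * real p ^ h k"
  have "g(i := x, j := y) \<in> compositions e"
    using g assms(2,3) by (intro update2_in_compositions) (auto simp: maximisers_def)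
  then have le: "sum (?t (g(i := x, j := y))) UNIV \<le> sum (?t g) UNIV"
    using g by (auto simp: maximisers_def inner_exp_vec)
  have update: "?t (g(i := x, j := y)) = (?t g)(i := a$i * real p ^ x, j := a$j * real p ^ y)"
    using assms(2) by (auto simp: fun_eq_iff)
  have "sum (?t (g(i := x, j := y))) UNIV + ?t g i + ?t g j
      = sum (?t g) UNIV + a$i * real p ^ x + a$j * real p ^ y"
    unfolding update by (rule sum_update2) (use assms(2) in simp_all)
  with le show ?thesis
    by linarith
qed

lemma top_exponents_unit_shift:
  assumes p: "p \<ge> 2" and g: "g \<in> top_exponents p e a" and "i \<noteq> j" "g i \<ge> 1"
  shows "a$j * real p ^ g j \<le> a$i * real p ^ (g i - 1)"
proof -
  obtain u where u: "g i = Suc u"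
    using \<open>g i \<ge> 1\<close> by (cases "g i") auto
  have "a$i * real p ^ u + a$j * real p ^ Suc (g j) \<le> a$i * real p ^ Suc u + a$j * real p ^ g j"
    using top_exponents_exchange[OF g \<open>i \<noteq> j\<close>, of u "Suc (g j)"] u by simp
  then have "(real p - 1) * (a$j * real p ^ g j) \<le> (real p - 1) * (a$i * real p ^ u)"
    by (simp add: algebra_simps)
  moreover have "real p - 1 > 0"
    using p by simp
  ultimately show ?thesis
    using u by (simp add: mult_le_cancel_left_pos)
qed

definition concentrated :: "nat \<Rightarrow> 'n \<Rightarrow> 'n \<Rightarrow> nat" where
  "concentrated e k = (\<lambda>j. if j = k then e else 0)"

definition vertex_exponents :: "nat \<Rightarrow> ('n::finite \<Rightarrow> nat) set" where
  "vertex_exponents e = range (concentrated e)"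

definition zero_coordinate_exponents :: "nat \<Rightarrow> 'n \<Rightarrow> ('n::finite \<Rightarrow> nat) set" where
  "zero_coordinate_exponents e i = {g \<in> compositions e. g i = 0}"

definition layer_exponents :: "nat \<Rightarrow> ('n::finite \<Rightarrow> nat) \<Rightarrow> ('n \<Rightarrow> nat) set" where
  "layer_exponents l b =
     {(\<lambda>j. b j + \<epsilon> j) | \<epsilon>. (\<forall>j. \<epsilon> j \<in> {0, 1}) \<and> sum \<epsilon> UNIV = l}"

text \<open>Disjuncts (1), (2) and (3) of the theorem, in exponent coordinates.\<close>

definition facet_exponent_set :: "nat \<Rightarrow> ('n::finite \<Rightarrow> nat) set \<Rightarrow> bool" where
  "facet_exponent_set e L \<longleftrightarrow> L = vertex_exponents e \<or> (\<exists>i. L = zero_coordinate_exponents e i) \<or>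
     (\<exists>l b. l \<in> {1..min e (CARD('n) - 1)} \<and> sum b UNIV = e - l \<and> L = layer_exponents l b)"

definition pointwise_close :: "('n \<Rightarrow> nat) set \<Rightarrow> bool" where
  "pointwise_close M \<longleftrightarrow> (\<forall>g\<in>M. \<forall>h\<in>M. \<forall>i. g i \<le> h i + 1)"

lemma facet_exponent_set_cases:
  assumes "facet_exponent_set e (L :: ('n::finite \<Rightarrow> nat) set)"
  obtains "L = vertex_exponents e"
    | i where "L = zero_coordinate_exponents e i"
    | l b where "1 \<le> l" "l \<le> CARD('n) - 1" "sum b UNIV + l = e" "L = layer_exponents l b"
proof -
  consider "L = vertex_exponents e" | i where "L = zero_coordinate_exponents e i"
    | l b where "l \<in> {1..min e (CARD('n) - 1)}" "sum b UNIV = e - l" "L = layer_exponents l b"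
    using assms unfolding facet_exponent_set_def by blast
  then show thesis
  proof cases
    case 1
    then show thesis by (rule that(1))
  next
    case (2 i)
    then show thesis by (rule that(2))
  next
    case (3 l b)
    then show thesis by (intro that(3)[of l b]) auto
  qed
qed

lemma facet_exponent_set_vertex: "facet_exponent_set e (vertex_exponents e)"
  by (simp add: facet_exponent_set_def)

lemma facet_exponent_set_zero_coordinate: "facet_exponent_set e (zero_coordinate_exponents e i)"
  unfolding facet_exponent_set_def by blast

lemma facet_exponent_set_layer:
  assumes "1 \<le> l" "l \<le> CARD('n::finite) - 1" "sum b UNIV + l = e"
  shows "facet_exponent_set e (layer_exponents l (b :: 'n \<Rightarrow> nat))"
  unfolding facet_exponent_set_def using assms by (intro disjI2 exI[of _ l] exI[of _ b]) auto

lemma obtain_coordinates_avoiding: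
  fixes A :: "'n::finite set"
  assumes "n + card A \<le> CARD('n)"
  obtains T where "T \<inter> A = {}" "card T = n"
proof -
  have "n \<le> card (UNIV - A)"
    using assms by (simp add: card_Diff_subset)
  then obtain T where "T \<subseteq> UNIV - A" "card T = n"
    by (meson obtain_subset_with_card_n)
  then show ?thesis
    using that by blast
qed

lemma obtain_two_other_coordinates:
  fixes i :: "'n::finite"
  assumes "CARD('n) \<ge> 3"
  obtains j k where "j \<noteq> i" "k \<noteq> i" "j \<noteq> k"
proof -
  obtain T where T: "T \<inter> {i} = {}" "card T = 2"
    using obtain_coordinates_avoiding[of 2 "{i}"] assms by auto
  then obtain j k where "T = {j, k}" "j \<noteq> k"
    by (auto simp: card_2_iff)
  then show ?thesis
    using T(1) by (intro that[of j k]) auto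
qed

lemma sum_concentrated [simp]: "sum (concentrated e (k :: 'n::finite)) UNIV = e"
  by (simp add: concentrated_def)

lemma concentrated_in_compositions: "concentrated e k \<in> compositions e"
  by (simp add: compositions_def)

lemma concentrated_in_vertex_exponents: "concentrated e k \<in> vertex_exponents e"
  by (simp add: vertex_exponents_def)

lemma concentrated_in_zero_coordinate_exponents:
  "j \<noteq> i \<Longrightarrow> concentrated e j \<in> zero_coordinate_exponents e i"
  using concentrated_in_compositions[of e j]
  by (simp add: zero_coordinate_exponents_def concentrated_def)

lemma concentrated_in_own_zero_coordinate_exponents_iff:
  "concentrated e i \<in> zero_coordinate_exponents e i \<longleftrightarrow> e = 0"
  by (simp add: zero_coordinate_exponents_def compositions_def concentrated_def)

lemma not_pointwise_close_concentrated:
  assumes "e \<ge> 2" "j \<noteq> k" "concentrated e j \<in> M" "concentrated e k \<in> M"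
  shows "\<not> pointwise_close M"
proof
  assume "pointwise_close M"
  then have "concentrated e j j \<le> concentrated e k j + 1"
    using assms(3,4) unfolding pointwise_close_def by blast
  then show False
    using assms(1,2) by (simp add: concentrated_def)
qed

lemma layer_exponents_iff:
  "g \<in> layer_exponents l b \<longleftrightarrow>
     (\<forall>j. b j \<le> g j \<and> g j \<le> b j + 1) \<and> sum g UNIV = sum b UNIV + l"
proof
  assume "g \<in> layer_exponents l b"
  then obtain \<epsilon> where \<epsilon>: "\<forall>j. \<epsilon> j \<in> {0, 1}" "sum \<epsilon> UNIV = l" "g = (\<lambda>j. b j + \<epsilon> j)"
    by (auto simp: layer_exponents_def)
  have "\<epsilon> j \<le> 1" for j
    using \<epsilon>(1) by (metis insertE le_numeral_extra(4) singletonD zero_le)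
  then show "(\<forall>j. b j \<le> g j \<and> g j \<le> b j + 1) \<and> sum g UNIV = sum b UNIV + l"
    using \<epsilon>(2,3) by (simp add: sum.distrib)
next
  assume g: "(\<forall>j. b j \<le> g j \<and> g j \<le> b j + 1) \<and> sum g UNIV = sum b UNIV + l"
  then have "sum (\<lambda>j. g j - b j) UNIV = l"
    by (simp add: sum_subtractf_nat)
  moreover have "\<forall>j. g j - b j \<in> {0, 1}" and "g = (\<lambda>j. b j + (g j - b j))"
    using g by (auto simp: le_Suc_eq fun_eq_iff)
  ultimately show "g \<in> layer_exponents l b"
    unfolding layer_exponents_def by (intro CollectI exI[of _ "\<lambda>j. g j - b j"]) blast
qed

lemma pointwise_close_layer_exponents: "pointwise_close (layer_exponents l b)"
  unfolding pointwise_close_def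
proof (intro ballI allI)
  fix g h i assume "g \<in> layer_exponents l b" "h \<in> layer_exponents l b"
  then have "g i \<le> b i + 1" "b i \<le> h i"
    by (auto simp: layer_exponents_iff)
  then show "g i \<le> h i + 1"
    by simp
qed

lemma layer_exponents_subset_compositions:
  "sum b UNIV + l = e \<Longrightarrow> layer_exponents l b \<subseteq> compositions e"
  by (auto simp: layer_exponents_iff compositions_def)

lemma indicator_shift_in_layer_exponents:
  "(\<lambda>j. b j + (if j \<in> T then 1 else 0)) \<in> layer_exponents (card T) (b :: 'n::finite \<Rightarrow> nat)"
  unfolding layer_exponents_def
  by (intro CollectI exI[of _ "\<lambda>j. if j \<in> T then 1 else 0"]) (simp add: sum.If_cases)

lemma layer_exponents_attain:
  fixes b :: "'n::finite \<Rightarrow> nat"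
  assumes "1 \<le> l" "l \<le> CARD('n) - 1"
  shows "\<exists>g\<in>layer_exponents l b. g i = b i" and "\<exists>g\<in>layer_exponents l b. g i = b i + 1"
proof -
  obtain T where T: "T \<inter> {i} = {}" "card T = l"
    by (rule obtain_coordinates_avoiding[of l "{i}"]) (use assms in auto)
  then have "(\<lambda>j. b j + (if j \<in> T then 1 else 0)) \<in> layer_exponents l b"
    using indicator_shift_in_layer_exponents[of b T] by simp
  then show "\<exists>g\<in>layer_exponents l b. g i = b i"
    by (rule bexI[rotated]) (use T in auto)
  obtain T' where T': "T' \<inter> {i} = {}" "card T' = l - 1"
    by (rule obtain_coordinates_avoiding[of "l - 1" "{i}"]) (use assms in auto)
  then have "card (insert i T') = l"
    using assms(1) by simp
  then have "(\<lambda>j. b j + (if j \<in> insert i T' then 1 else 0)) \<in> layer_exponents l b"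
    using indicator_shift_in_layer_exponents[of b "insert i T'"] by simp
  then show "\<exists>g\<in>layer_exponents l b. g i = b i + 1"
    by (rule bexI[rotated]) simp
qed

lemma layer_exponents_degenerate:
  fixes b :: "'n::finite \<Rightarrow> nat"
  assumes "l = 0 \<or> CARD('n) \<le> l" and "g \<in> layer_exponents l b" "h \<in> layer_exponents l b"
  shows "g = h"
proof -
  have canonical: "f = (if l = 0 then b else (\<lambda>j. b j + 1))" if f: "f \<in> layer_exponents l b" for f
  proof -
    have lower: "\<And>j. b j \<le> f j" and upper: "\<And>j. f j \<le> b j + 1"
      and sum_f: "sum f UNIV = sum b UNIV + l"
      using f by (auto simp: layer_exponents_iff)
    show ?thesis
    proof (cases "l = 0")
      case True
      have "b j = f j" for j
        using sum_mono_inv[of b UNIV f j] lower sum_f True by simp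
      then show ?thesis
        using True by auto
    next
      case False
      have "sum f UNIV \<le> sum (\<lambda>j. b j + 1) UNIV"
        using upper by (intro sum_mono) auto
      then have "sum f UNIV = sum (\<lambda>j. b j + 1) UNIV"
        using assms(1) False sum_f by (simp add: sum_Suc)
      then have "f j = b j + 1" for j
        using sum_mono_inv[of f UNIV "\<lambda>j. b j + 1" j] upper by simp
      then show ?thesis
        using False by auto
    qed
  qed
  show ?thesis
    using canonical[OF assms(2)] canonical[OF assms(3)] by simp
qed

section \<open>Classifying the maximal exponent sets\<close>

lemma top_exponents_positive_entry:
  assumes p: "p \<ge> 2" and "e \<ge> 1" and pos: "a$j > 0" and g: "g \<in> top_exponents p e a"
  shows "g \<in> vertex_exponents e"
proof -
  have big: "real p ^ n > 1" if "n \<noteq> 0" for n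
    using p that by (simp add: one_less_power)
  have support_pos: "a$i > 0" if "g i \<noteq> 0" for i
  proof (rule ccontr)
    assume "\<not> a$i > 0"
    then have "i \<noteq> j" and "a$i * real p ^ g i \<le> a$i * 1"
      using pos big[OF that] mult_left_mono_neg[of 1 "real p ^ g i" "a$i"] by auto
    moreover have "a$j * real p ^ g j < a$j * real p ^ (g j + g i)"
      using pos p that by (intro mult_strict_left_mono power_strict_increasing) auto
    ultimately show False
      using top_exponents_exchange[OF g \<open>i \<noteq> j\<close>, of 0 "g j + g i"] by simp
  qed
  \<comment> \<open>Emptying coordinate \<open>i\<close> into \<open>k\<close> and emptying \<open>k\<close> into \<open>i\<close> cannot both fail to help.\<close>
  have others_zero: "g k = 0" if "g i \<noteq> 0" "k \<noteq> i" for i k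
  proof (rule ccontr)
    assume "g k \<noteq> 0"
    define X Y where "X = real p ^ g i" and "Y = real p ^ g k"
    have X: "X > 1" and Y: "Y > 1"
      using big \<open>g i \<noteq> 0\<close> \<open>g k \<noteq> 0\<close> by (auto simp: X_def Y_def)
    have "a$i + a$k * (Y * X) \<le> a$i * X + a$k * Y"
      using top_exponents_exchange[OF g \<open>k \<noteq> i\<close>[symmetric], of 0 "g k + g i"]
      by (simp add: X_def Y_def power_add)
    then have "(X - 1) * (a$k * Y) \<le> (X - 1) * a$i"
      by (simp add: algebra_simps)
    then have ki: "a$k * Y \<le> a$i"
      using X by simp
    have "a$k + a$i * (X * Y) \<le> a$k * Y + a$i * X"
      using top_exponents_exchange[OF g \<open>k \<noteq> i\<close>, of 0 "g i + g k"]
      by (simp add: X_def Y_def power_add)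
    then have "(Y - 1) * (a$i * X) \<le> (Y - 1) * a$k"
      by (simp add: algebra_simps)
    then have ik: "a$i * X \<le> a$k"
      using Y by simp
    have "a$k * (Y * X) = (a$k * Y) * X"
      by (simp add: ac_simps)
    also have "\<dots> \<le> a$i * X"
      using ki X by (intro mult_right_mono) auto
    also have "\<dots> \<le> a$k * 1"
      using ik by simp
    finally have "a$k * (Y * X) \<le> a$k * 1" .
    then show False
      using support_pos[OF \<open>g k \<noteq> 0\<close>] X Y less_1_mult[of Y X] by simp
  qed
  have "sum g UNIV = e"
    using g by (simp add: maximisers_def compositions_def)
  obtain i where i: "g i \<noteq> 0"
  proof (rule ccontr)
    assume "\<not> thesis"
    then have "sum g UNIV = 0"
      using that by (intro sum.neutral) blast
    then show False
      using \<open>sum g UNIV = e\<close> \<open>e \<ge> 1\<close> by simp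
  qed
  have "sum g UNIV = (\<Sum>j\<in>UNIV. if j = i then g i else 0)"
    using others_zero[OF i] by (intro sum.cong) auto
  then have "g i = e"
    using \<open>sum g UNIV = e\<close> by simp
  then have "g = concentrated e i"
    using others_zero[OF i] by (auto simp: concentrated_def)
  then show ?thesis
    by (simp add: concentrated_in_vertex_exponents)
qed

lemma top_exponents_zero_entry:
  assumes p: "p \<ge> 2" and nonpos: "\<And>j. a$j \<le> 0" and "a$i = 0" and neg: "a$k < 0"
    and g: "g \<in> top_exponents p e a"
  shows "g \<in> zero_coordinate_exponents e k"
proof -
  have "a \<bullet> exp_vec p (concentrated e i) \<le> a \<bullet> exp_vec p g"
    using g concentrated_in_compositions by (auto simp: maximisers_def)
  moreover have "a \<bullet> exp_vec p (concentrated e i) = (\<Sum>j\<in>UNIV. a$j)"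
    unfolding inner_exp_vec concentrated_def by (rule sum.cong) (auto simp: \<open>a$i = 0\<close>)
  ultimately have ge: "(\<Sum>j\<in>UNIV. a$j) \<le> (\<Sum>j\<in>UNIV. a$j * real p ^ g j)"
    by (simp add: inner_exp_vec)
  have le: "a$j * real p ^ g j \<le> a$j" for j
    using mult_left_mono_neg[of 1 "real p ^ g j" "a$j"] nonpos[of j] p by (simp add: one_le_power)
  have "g k = 0"
  proof (rule ccontr)
    assume "g k \<noteq> 0"
    then have "a$k * real p ^ g k < a$k"
      using neg p by (simp add: mult_less_cancel_left2 one_less_power)
    then have "(\<Sum>j\<in>UNIV. a$j * real p ^ g j) < (\<Sum>j\<in>UNIV. a$j)"
      using le by (intro sum_strict_mono_ex1) auto
    then show False
      using ge by simp
  qed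
  then show ?thesis
    using g by (simp add: zero_coordinate_exponents_def maximisers_def)
qed

lemma pointwise_close_top_exponents:
  assumes p: "p \<ge> 2" and neg: "\<And>j. a$j < 0"
  shows "pointwise_close (top_exponents p e a)"
  unfolding pointwise_close_def
proof (intro ballI allI)
  fix g h i assume g: "g \<in> top_exponents p e a" and h: "h \<in> top_exponents p e a"
  show "g i \<le> h i + 1"
  proof (rule ccontr)
    assume far: "\<not> g i \<le> h i + 1"
    have "\<exists>j. g j < h j"
    proof (rule ccontr)
      assume "\<not> (\<exists>j. g j < h j)"
      moreover have "h i < g i"
        using far by simp
      ultimately have "sum h UNIV < sum g UNIV"
        by (intro sum_strict_mono_ex1) (auto simp: not_less)
      then show False
        using g h by (simp add: maximisers_def compositions_def)
    qed
    then obtain j where j: "g j < h j" by blast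
    then have "i \<noteq> j"
      using far by auto
    have "a$i * real p ^ h i \<le> a$j * real p ^ (h j - 1)"
      using top_exponents_unit_shift[OF p h \<open>i \<noteq> j\<close>[symmetric]] j by simp
    also have "\<dots> \<le> a$j * real p ^ g j"
      using neg[of j] j p by (intro mult_left_mono_neg power_increasing) auto
    also have "\<dots> \<le> a$i * real p ^ (g i - 1)"
      using top_exponents_unit_shift[OF p g \<open>i \<noteq> j\<close>] far by simp
    also have "\<dots> < a$i * real p ^ h i"
      using neg[of i] far p by (simp add: power_strict_increasing)
    finally show False by simp
  qed
qed

lemma composition_in_facet_exponent_set:
  assumes "e \<ge> 2" "CARD('n::finite) \<ge> 3" and g: "g \<in> compositions e"
  shows "\<exists>L. facet_exponent_set e L \<and> (g :: 'n \<Rightarrow> nat) \<in> L"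
proof (cases "\<exists>i. g i = 0")
  case True
  then obtain i where "g \<in> zero_coordinate_exponents e i"
    using g by (auto simp: zero_coordinate_exponents_def)
  then show ?thesis
    using facet_exponent_set_zero_coordinate by blast
next
  case False
  define b where "b = (\<lambda>j. g j - (if j \<in> {undefined} then 1 else 0))"
  have g_eq: "g = (\<lambda>j. b j + (if j \<in> {undefined} then 1 else 0))"
    using False by (auto simp: b_def fun_eq_iff)
  then have "g \<in> layer_exponents 1 b"
    using indicator_shift_in_layer_exponents[of b "{undefined}"] by simp
  moreover have "sum b UNIV + 1 = e"
    using g \<open>g \<in> layer_exponents 1 b\<close> by (simp add: layer_exponents_iff compositions_def)
  then have "facet_exponent_set e (layer_exponents 1 b)"
    using assms by (intro facet_exponent_set_layer) auto
  ultimately show ?thesis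
    by blast
qed

lemma pointwise_close_subset_facet_exponent_set:
  assumes e: "e \<ge> 2" and d: "CARD('n::finite) \<ge> 3"
    and M: "M \<subseteq> compositions e" "g0 \<in> M" "pointwise_close (M :: ('n \<Rightarrow> nat) set)"
  shows "\<exists>L. facet_exponent_set e L \<and> M \<subseteq> L"
proof -
  have "finite M"
    using M(1) finite_compositions by (rule finite_subset)
  define b where "b i = Min ((\<lambda>g. g i) ` M)" for i
  have b_le: "b i \<le> g i" if "g \<in> M" for g i
    unfolding b_def using \<open>finite M\<close> that by (intro Min_le) auto
  have le_b: "g i \<le> b i + 1" if "g \<in> M" for g i
  proof -
    have "b i \<in> (\<lambda>g. g i) ` M"
      unfolding b_def using \<open>finite M\<close> M(2) by (intro Min_in) auto
    then obtain h where "h \<in> M" "b i = h i"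
      by auto
    then show ?thesis
      using M(3) that by (auto simp: pointwise_close_def)
  qed
  have "sum b UNIV \<le> e"
    using sum_mono[of UNIV b g0] b_le M by (auto simp: compositions_def)
  define l where "l = e - sum b UNIV"
  have b_l: "sum b UNIV + l = e"
    using \<open>sum b UNIV \<le> e\<close> by (simp add: l_def)
  have M_layer: "M \<subseteq> layer_exponents l b"
    using b_le le_b M(1) b_l by (auto simp: layer_exponents_iff compositions_def)
  show ?thesis
  proof (cases "1 \<le> l \<and> l \<le> CARD('n) - 1")
    case True
    then have "facet_exponent_set e (layer_exponents l b)"
      using b_l by (intro facet_exponent_set_layer) auto
    then show ?thesis
      using M_layer by blast
  next
    case False
    then have "l = 0 \<or> CARD('n) \<le> l"
      by auto
    then have "M \<subseteq> {g0}"
      using layer_exponents_degenerate[of l _ b] M_layer M(2) by blast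
    moreover obtain L where "facet_exponent_set e L" "g0 \<in> L"
      using composition_in_facet_exponent_set[OF e d] M(1,2) by blast
    ultimately show ?thesis
      by blast
  qed
qed

lemma top_exponents_subset_facet_exponent_set:
  assumes p: "p \<ge> 2" and e: "e \<ge> 2" and d: "CARD('n::finite) \<ge> 3" and "a \<noteq> 0"
  shows "\<exists>L. facet_exponent_set e L \<and> top_exponents p e (a :: real^'n) \<subseteq> L"
proof -
  obtain k where "a$k \<noteq> 0"
    using \<open>a \<noteq> 0\<close> by (auto simp: vec_eq_iff)
  consider (pos) j where "a$j > 0" | (zero) i where "\<forall>j. a$j \<le> 0" "a$i = 0"
    | (neg) "\<forall>j. a$j < 0"
    by (metis not_less le_less)
  then show ?thesis
  proof cases
    case (pos j)
    have "1 \<le> e"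
      using e by simp
    then have "top_exponents p e a \<subseteq> vertex_exponents e"
      using top_exponents_positive_entry[OF p _ pos] by blast
    then show ?thesis
      using facet_exponent_set_vertex by blast
  next
    case (zero i)
    then have "a$k < 0"
      using \<open>a$k \<noteq> 0\<close> by (metis less_le)
    then have "top_exponents p e a \<subseteq> zero_coordinate_exponents e k"
      using top_exponents_zero_entry[OF p] zero by blast
    then show ?thesis
      using facet_exponent_set_zero_coordinate by blast
  next
    case neg
    obtain g0 where g0: "g0 \<in> top_exponents p e a"
      using maximisers_nonempty[OF finite_compositions] concentrated_in_compositions by blast
    have "top_exponents p e a \<subseteq> compositions e"
      by (auto simp: maximisers_def)
    moreover have "pointwise_close (top_exponents p e a)"
      using neg by (intro pointwise_close_top_exponents[OF p]) auto
    ultimately show ?thesis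
      using pointwise_close_subset_facet_exponent_set[OF e d _ g0] by blast
  qed
qed

section \<open>Realising the exponent sets by functionals\<close>

lemma top_exponents_ones:
  assumes "p \<ge> 2" "e \<ge> 1"
  shows "top_exponents p e 1 = (vertex_exponents e :: ('n::finite \<Rightarrow> nat) set)"
proof (rule maximisers_eq_of_constant)
  show "top_exponents p e (1 :: real^'n) \<subseteq> vertex_exponents e"
    using top_exponents_positive_entry[OF assms(1,2), of 1 undefined] by auto
  show "vertex_exponents e \<subseteq> compositions e"
    by (auto simp: vertex_exponents_def concentrated_in_compositions)
  have "(1 :: real^'n) \<bullet> exp_vec p (concentrated e k) = real CARD('n) + (real p ^ e - 1)" for k :: 'n
  proof -
    have "real p ^ concentrated e k j = 1 + (if j = k then real p ^ e - 1 else 0)" for j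
      by (simp add: concentrated_def)
    then show ?thesis
      by (simp add: inner_exp_vec sum.distrib)
  qed
  then show "\<forall>g\<in>vertex_exponents e. \<forall>h\<in>vertex_exponents e.
      (1 :: real^'n) \<bullet> exp_vec p g = (1 :: real^'n) \<bullet> exp_vec p h"
    by (auto simp: vertex_exponents_def)
  show "top_exponents p e (1 :: real^'n) \<noteq> {}"
    using maximisers_nonempty[OF finite_compositions] concentrated_in_compositions by blast
qed

lemma top_exponents_neg_axis:
  assumes "p \<ge> 2" "CARD('n::finite) \<ge> 2"
  shows "top_exponents p e (- axis i 1 :: real^'n) = zero_coordinate_exponents e i"
proof -
  have inner_eq: "(- axis i 1 :: real^'n) \<bullet> exp_vec p g = - (real p ^ g i)" for g
    by (simp add: inner_axis' exp_vec_def)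
  obtain T where T: "T \<inter> {i} = {}" "card T = 1"
    by (rule obtain_coordinates_avoiding[of 1 "{i}"]) (use assms(2) in auto)
  then obtain j where "T = {j}"
    by (auto simp: card_1_singleton_iff)
  then have "j \<noteq> i"
    using T(1) by auto
  have "top_exponents p e (- axis i 1 :: real^'n) = {g \<in> compositions e. - (real p ^ g i) = - 1}"
    unfolding inner_eq
  proof (rule maximisers_eq_level_set)
    show "\<forall>g\<in>compositions e. - (real p ^ g i) \<le> - 1"
      using assms(1) by (simp add: one_le_power)
    show "concentrated e j \<in> compositions e"
      by (rule concentrated_in_compositions)
    show "- (real p ^ concentrated e j i) = - 1"
      using \<open>j \<noteq> i\<close> by (simp add: concentrated_def)
  qed
  also have "\<dots> = zero_coordinate_exponents e i"
  proof -
    have "1 < real p"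
      using assms(1) by simp
    then have "real p ^ n = 1 \<longleftrightarrow> n = 0" for n
      using power_inject_exp[OF \<open>1 < real p\<close>, of n 0] by simp
    then show ?thesis
      by (auto simp: zero_coordinate_exponents_def)
  qed
  finally show ?thesis .
qed

lemma one_plus_mult_less_power:
  fixes x :: "'a::linordered_idom"
  assumes "x > 1" "n \<ge> 2"
  shows "1 + of_nat n * (x - 1) < x ^ n"
  using \<open>n \<ge> 2\<close>
proof (induction n rule: nat_induct_at_least)
  case base
  have "(x - 1) * (x - 1) > 0"
    using assms(1) by simp
  then show ?case
    by (simp add: power2_eq_square algebra_simps)
next
  case (Suc n)
  have "0 \<le> of_nat n * ((x - 1) * (x - 1))"
    by simp
  then have "1 + of_nat (Suc n) * (x - 1) \<le> x * (1 + of_nat n * (x - 1))"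
    by (simp add: algebra_simps)
  also have "\<dots> < x * x ^ n"
    using Suc.IH assms(1) by (intro mult_strict_left_mono) auto
  finally show ?case
    by simp
qed

lemma tangent_power_ratio:
  fixes P :: real
  assumes "P \<ge> 2"
  shows "1 + (P - 1) * (real x - real b) \<le> P ^ x / P ^ b"
    and "1 + (P - 1) * (real x - real b) = P ^ x / P ^ b \<longleftrightarrow> b \<le> x \<and> x \<le> b + 1"
proof -
  have "P > 0"
    using assms by simp
  have strict: "1 + (P - 1) * (real x - real b) < P ^ x / P ^ b" if "\<not> (b \<le> x \<and> x \<le> b + 1)"
  proof (cases "b \<le> x")
    case True
    define n where "n = x - b"
    have "x = b + n" "n \<ge> 2"
      using True that by (auto simp: n_def)
    then show ?thesis
      using one_plus_mult_less_power[of P n] assms \<open>P > 0\<close> by (simp add: power_add ac_simps)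
  next
    case False
    then have "real x - real b \<le> - 1"
      by simp
    then have "(P - 1) * (real x - real b) \<le> (P - 1) * - 1"
      using assms by (intro mult_left_mono) auto
    then have "(P - 1) * (real x - real b) \<le> 1 - P"
      by simp
    moreover have "P ^ x / P ^ b > 0"
      using \<open>P > 0\<close> by simp
    ultimately show ?thesis
      using assms by linarith
  qed
  have eq: "1 + (P - 1) * (real x - real b) = P ^ x / P ^ b" if "b \<le> x \<and> x \<le> b + 1"
  proof -
    have "x = b \<or> x = b + 1"
      using that by auto
    then show ?thesis
      using \<open>P > 0\<close> by (auto simp: power_add)
  qed
  show "1 + (P - 1) * (real x - real b) \<le> P ^ x / P ^ b"
    using strict eq by (cases "b \<le> x \<and> x \<le> b + 1") (simp, linarith)
  show "1 + (P - 1) * (real x - real b) = P ^ x / P ^ b \<longleftrightarrow> b \<le> x \<and> x \<le> b + 1"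
    using strict eq by (cases "b \<le> x \<and> x \<le> b + 1") auto
qed

lemma top_exponents_layer:
  fixes b :: "'n::finite \<Rightarrow> nat"
  assumes p: "p \<ge> 2" and l: "1 \<le> l" "l \<le> CARD('n) - 1" and b: "sum b UNIV + l = e"
  shows "top_exponents p e (\<chi> j. - 1 / real p ^ b j) = layer_exponents l b"
proof -
  let ?ratio = "\<lambda>g j. real p ^ g j / real p ^ b j"
  let ?tangent = "\<lambda>g j. 1 + (real p - 1) * (real (g j) - real (b j))"
  define B where "B = real CARD('n) + (real p - 1) * real l"
  have P: "real p \<ge> 2"
    using p by simp
  have inner_eq: "(\<chi> j. - 1 / real p ^ b j) \<bullet> exp_vec p g = - sum (?ratio g) UNIV" for g
    by (simp add: inner_exp_vec sum_negf)
  have tangent_sum: "sum (?tangent g) UNIV = B" if "g \<in> compositions e" for g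
  proof -
    have "sum g UNIV = sum b UNIV + l"
      using that b by (simp add: compositions_def)
    then have "(\<Sum>j\<in>UNIV. real (g j)) = (\<Sum>j\<in>UNIV. real (b j)) + real l"
      by (simp flip: of_nat_sum)
    then show ?thesis
      by (simp add: B_def sum.distrib sum_subtractf flip: sum_distrib_left)
  qed
  have ratio_ge: "B \<le> sum (?ratio g) UNIV" if "g \<in> compositions e" for g
    unfolding tangent_sum[OF that, symmetric] by (intro sum_mono tangent_power_ratio(1)[OF P])
  have ratio_eq: "sum (?ratio g) UNIV = B \<longleftrightarrow> g \<in> layer_exponents l b"
    if "g \<in> compositions e" for g
  proof
    assume "sum (?ratio g) UNIV = B"
    then have "sum (?tangent g) UNIV = sum (?ratio g) UNIV"
      using tangent_sum[OF that] by simp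
    then have "?tangent g j = ?ratio g j" for j
      by (rule sum_mono_inv[of "?tangent g" UNIV "?ratio g"]) (use tangent_power_ratio(1)[OF P] in auto)
    then have "b j \<le> g j \<and> g j \<le> b j + 1" for j
      using tangent_power_ratio(2)[OF P, of "g j" "b j"] by simp
    then show "g \<in> layer_exponents l b"
      using that b by (simp add: layer_exponents_iff compositions_def)
  next
    assume "g \<in> layer_exponents l b"
    then have "?tangent g j = ?ratio g j" for j
      using tangent_power_ratio(2)[OF P, of "g j" "b j"] by (simp add: layer_exponents_iff)
    then show "sum (?ratio g) UNIV = B"
      using tangent_sum[OF that] by simp
  qed
  obtain g0 where g0: "g0 \<in> layer_exponents l b"
    using layer_exponents_attain(1)[OF l] by blast
  have "top_exponents p e (\<chi> j. - 1 / real p ^ b j) = {g \<in> compositions e. - sum (?ratio g) UNIV = - B}"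
    unfolding inner_eq
  proof (rule maximisers_eq_level_set)
    show "g0 \<in> compositions e"
      using g0 layer_exponents_subset_compositions[OF b] by blast
    then show "- sum (?ratio g0) UNIV = - B"
      using ratio_eq g0 by simp
  qed (use ratio_ge in auto)
  also have "\<dots> = layer_exponents l b"
    using ratio_eq layer_exponents_subset_compositions[OF b] by auto
  finally show ?thesis .
qed

lemma facet_exponent_set_top_exponents:
  assumes p: "p \<ge> 2" and e: "e \<ge> 2" and d: "CARD('n::finite) \<ge> 3"
    and L: "facet_exponent_set e (L :: ('n \<Rightarrow> nat) set)"
  obtains a :: "real^'n" where "top_exponents p e a = L"
  using L
proof (cases rule: facet_exponent_set_cases)
  case 1
  have "1 \<le> e"
    using e by simp
  then have "top_exponents p e (1 :: real^'n) = L"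
    unfolding 1 by (rule top_exponents_ones[OF p])
  then show ?thesis
    by (rule that)
next
  case (2 i)
  have "CARD('n) \<ge> 2"
    using d by simp
  then have "top_exponents p e (- axis i 1 :: real^'n) = L"
    unfolding 2 by (rule top_exponents_neg_axis[OF p])
  then show ?thesis
    by (rule that)
next
  case (3 l b)
  have "top_exponents p e (\<chi> j. - 1 / real p ^ b j) = L"
    using top_exponents_layer[OF p 3(1-3)] 3(4) by simp
  then show ?thesis
    by (rule that)
qed

lemma facet_exponent_set_nonempty:
  assumes "CARD('n::finite) \<ge> 3" "facet_exponent_set e (L :: ('n \<Rightarrow> nat) set)"
  shows "L \<noteq> {}"
  using assms(2)
proof (cases rule: facet_exponent_set_cases)
  case 1
  then show ?thesis
    using concentrated_in_vertex_exponents by blast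
next
  case (2 i)
  obtain j k :: 'n where "j \<noteq> i" "k \<noteq> i" "j \<noteq> k"
    using obtain_two_other_coordinates[OF assms(1)] .
  then show ?thesis
    using 2 concentrated_in_zero_coordinate_exponents by blast
next
  case (3 l b)
  then show ?thesis
    using layer_exponents_attain(1)[OF 3(1,2)] by blast
qed

lemma obtain_non_vertex_composition:
  assumes "e \<ge> 2" "j \<noteq> k" "i \<noteq> j" "i \<noteq> k"
  obtains m where "m \<in> compositions e" "m \<notin> vertex_exponents e" "m i = 0"
proof
  let ?m = "\<lambda>x. concentrated (e - 1) j x + concentrated 1 k x"
  show "?m \<in> compositions e"
    using assms(1) by (simp add: compositions_def sum.distrib)
  show "?m i = 0"
    using assms(3,4) by (simp add: concentrated_def)
  show "?m \<notin> vertex_exponents e"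
  proof
    assume "?m \<in> vertex_exponents e"
    then obtain q where q: "?m = concentrated e q"
      by (auto simp: vertex_exponents_def)
    have "concentrated e q j = e - 1" "concentrated e q k = 1"
      using fun_cong[OF q, of j] fun_cong[OF q, of k] assms(2) by (simp_all add: concentrated_def)
    then show False
      using assms by (auto simp: concentrated_def split: if_splits)
  qed
qed

lemma facet_exponent_set_proper:
  assumes e: "e \<ge> 2" and d: "CARD('n::finite) \<ge> 3" and L: "facet_exponent_set e (L :: ('n \<Rightarrow> nat) set)"
  shows "L \<noteq> compositions e"
proof -
  obtain j k :: 'n where jk: "j \<noteq> undefined" "k \<noteq> undefined" "j \<noteq> k"
    using obtain_two_other_coordinates[OF d] .
  show ?thesis
    using L
  proof (cases rule: facet_exponent_set_cases)
    case 1
    obtain m :: "'n \<Rightarrow> nat" where m: "m \<in> compositions e" "m \<notin> vertex_exponents e" "m undefined = 0"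
      by (rule obtain_non_vertex_composition[OF e jk(3) jk(1,2)[symmetric]])
    show ?thesis
    proof
      assume "L = compositions e"
      then show False
        using 1 m(1,2) by simp
    qed
  next
    case (2 i)
    have "concentrated e i \<notin> L"
      using 2 concentrated_in_own_zero_coordinate_exponents_iff[of e i] e by simp
    then show ?thesis
      using concentrated_in_compositions[of e i] by blast
  next
    case (3 l b)
    have "\<not> pointwise_close (compositions e :: ('n \<Rightarrow> nat) set)"
      by (rule not_pointwise_close_concentrated[OF e jk(3)]; rule concentrated_in_compositions)
    moreover have "pointwise_close L"
      using pointwise_close_layer_exponents[of l b] 3(4) by simp
    ultimately show ?thesis
      by (intro notI) simp
  qed
qed

lemma vertex_exponents_subset_facet_exponent_set:
  assumes e: "e \<ge> 2" and d: "CARD('n::finite) \<ge> 3"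
    and L: "facet_exponent_set e (L :: ('n \<Rightarrow> nat) set)" and sub: "vertex_exponents e \<subseteq> L"
  shows "L = vertex_exponents e"
proof -
  obtain j k :: 'n where jk: "j \<noteq> undefined" "k \<noteq> undefined" "j \<noteq> k"
    using obtain_two_other_coordinates[OF d] .
  show ?thesis
    using L
  proof (cases rule: facet_exponent_set_cases)
    case 1
    then show ?thesis .
  next
    case (2 i)
    then show ?thesis
      using sub concentrated_in_vertex_exponents[of e i]
        concentrated_in_own_zero_coordinate_exponents_iff[of e i] e by auto
  next
    case (3 l b)
    have "\<not> pointwise_close L"
      by (rule not_pointwise_close_concentrated[OF e jk(3)];
          rule subsetD[OF sub concentrated_in_vertex_exponents])
    then show ?thesis
      using pointwise_close_layer_exponents[of l b] 3(4) by simp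
  qed
qed

lemma zero_coordinate_exponents_subset_facet_exponent_set:
  assumes e: "e \<ge> 2" and d: "CARD('n::finite) \<ge> 3"
    and L: "facet_exponent_set e (L :: ('n \<Rightarrow> nat) set)" and sub: "zero_coordinate_exponents e i \<subseteq> L"
  shows "L = zero_coordinate_exponents e i"
proof -
  obtain j k :: 'n where jk: "j \<noteq> i" "k \<noteq> i" "j \<noteq> k"
    using obtain_two_other_coordinates[OF d] .
  have j_k_in: "concentrated e j \<in> L" "concentrated e k \<in> L"
    using sub jk concentrated_in_zero_coordinate_exponents by blast+
  show ?thesis
    using L
  proof (cases rule: facet_exponent_set_cases)
    case 1
    obtain m where m: "m \<in> compositions e" "m \<notin> vertex_exponents e" "m i = 0"
      by (rule obtain_non_vertex_composition[OF e jk(3) jk(1,2)[symmetric]])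
    then have "m \<in> zero_coordinate_exponents e i"
      by (simp add: zero_coordinate_exponents_def)
    then show ?thesis
      using sub 1 m(2) by blast
  next
    case (2 i')
    have "i' = i"
    proof (rule ccontr)
      assume "i' \<noteq> i"
      then have "concentrated e i' \<in> L"
        using sub concentrated_in_zero_coordinate_exponents by blast
      then show False
        using 2 concentrated_in_own_zero_coordinate_exponents_iff[of e i'] e by simp
    qed
    then show ?thesis
      using 2 by simp
  next
    case (3 l b)
    have "\<not> pointwise_close L"
      using j_k_in by (rule not_pointwise_close_concentrated[OF e jk(3)])
    then show ?thesis
      using pointwise_close_layer_exponents[of l b] 3(4) by simp
  qed
qed

lemma layer_exponents_subset_facet_exponent_set:
  assumes e: "e \<ge> 2" and l: "1 \<le> l" "l \<le> CARD('n::finite) - 1" and b: "sum b UNIV + l = e"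
    and L: "facet_exponent_set e (L :: ('n \<Rightarrow> nat) set)" and sub: "layer_exponents l b \<subseteq> L"
  shows "L = layer_exponents l b"
  using L
proof (cases rule: facet_exponent_set_cases)
  case 1
  obtain g h where g: "g \<in> layer_exponents l b" "g undefined = b undefined"
    and h: "h \<in> layer_exponents l b" "h undefined = b undefined + 1"
    using layer_exponents_attain[OF l] by blast
  then have "g \<in> vertex_exponents e" "h \<in> vertex_exponents e"
    using sub 1 by auto
  then obtain j k where jk: "g = concentrated e j" "h = concentrated e k"
    by (auto simp: vertex_exponents_def)
  then have "j \<noteq> k"
    using g(2) h(2) by auto
  have "\<not> pointwise_close (layer_exponents l b)"
  proof (rule not_pointwise_close_concentrated[OF e \<open>j \<noteq> k\<close>])
    show "concentrated e j \<in> layer_exponents l b" "concentrated e k \<in> layer_exponents l b"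
      using g(1) h(1) jk by simp_all
  qed
  then show ?thesis
    using pointwise_close_layer_exponents[of l b] by simp
next
  case (2 i)
  obtain g where "g \<in> layer_exponents l b" "g i = b i + 1"
    using layer_exponents_attain(2)[OF l] by blast
  then show ?thesis
    using sub 2 by (auto simp: zero_coordinate_exponents_def)
next
  case (3 l' b')
  have "b j = b' j" for j
  proof -
    obtain g h where g: "g \<in> layer_exponents l b" "g j = b j"
      and h: "h \<in> layer_exponents l b" "h j = b j + 1"
      using layer_exponents_attain[OF l] by blast
    then have "g \<in> layer_exponents l' b'" "h \<in> layer_exponents l' b'"
      using sub 3(4) by auto
    then have "b' j \<le> g j" "h j \<le> b' j + 1"
      by (simp_all add: layer_exponents_iff)
    then show ?thesis
      using g(2) h(2) by simp
  qed
  then have "b = b'"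
    by auto
  moreover have "l = l'"
    using b 3(3) \<open>b = b'\<close> by simp
  ultimately show ?thesis
    using 3(4) by simp
qed

lemma facet_exponent_set_subset_eq:
  assumes e: "e \<ge> 2" and d: "CARD('n::finite) \<ge> 3"
    and L: "facet_exponent_set e (L :: ('n \<Rightarrow> nat) set)" and L': "facet_exponent_set e L'"
    and "L \<subseteq> L'"
  shows "L = L'"
  using L
proof (cases rule: facet_exponent_set_cases)
  case 1
  then have "L' = vertex_exponents e"
    using \<open>L \<subseteq> L'\<close> by (intro vertex_exponents_subset_facet_exponent_set[OF e d L']) simp
  then show ?thesis
    using 1 by simp
next
  case (2 i)
  then have "L' = zero_coordinate_exponents e i"
    using \<open>L \<subseteq> L'\<close> by (intro zero_coordinate_exponents_subset_facet_exponent_set[OF e d L']) simp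
  then show ?thesis
    using 2 by simp
next
  case (3 l b)
  then have "L' = layer_exponents l b"
    using \<open>L \<subseteq> L'\<close> by (intro layer_exponents_subset_facet_exponent_set[OF e 3(1-3) L']) simp
  then show ?thesis
    using 3 by simp
qed

lemma facet_exponent_set_subset_compositions:
  assumes "facet_exponent_set e (L :: ('n::finite \<Rightarrow> nat) set)"
  shows "L \<subseteq> compositions e"
  using assms
proof (cases rule: facet_exponent_set_cases)
  case 1
  then show ?thesis
    by (auto simp: vertex_exponents_def concentrated_in_compositions)
next
  case (2 i)
  then show ?thesis
    by (auto simp: zero_coordinate_exponents_def)
next
  case (3 l b)
  then show ?thesis
    using layer_exponents_subset_compositions[OF 3(3)] by simp
qed

lemma facet_exponent_set_face:
  assumes p: "p \<ge> 2" and e: "e \<ge> 2" and d: "CARD('n::finite) \<ge> 3"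
    and L: "facet_exponent_set e (L :: ('n \<Rightarrow> nat) set)"
  shows "convex hull (exp_vec p ` L) face_of convex hull (exp_vec p ` compositions e)"
    and "convex hull (exp_vec p ` L) \<noteq> {}"
    and "convex hull (exp_vec p ` L) \<noteq> convex hull (exp_vec p ` compositions e)"
    and "\<And>g. g \<in> compositions e \<Longrightarrow> exp_vec p g \<in> convex hull (exp_vec p ` L) \<Longrightarrow> g \<in> L"
proof -
  obtain a :: "real^'n" where a: "top_exponents p e a = L"
    using facet_exponent_set_top_exponents[OF p e d L] .
  let ?V = "exp_vec p ` compositions e :: (real^'n) set"
  have image: "exp_vec p ` L = maximisers (inner a) ?V"
    using image_maximisers[of "exp_vec p" "inner a" "compositions e"] a by simp
  have fin: "finite ?V"
    by (simp add: finite_compositions)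
  show "convex hull (exp_vec p ` L) face_of convex hull ?V"
    unfolding image using fin by (rule face_of_convex_hull_maximisers)
  show "convex hull (exp_vec p ` L) \<noteq> {}"
    using facet_exponent_set_nonempty[OF d L] by simp
  show mem_L: "g \<in> L" if "g \<in> compositions e" "exp_vec p g \<in> convex hull (exp_vec p ` L)" for g
  proof -
    have "exp_vec p g \<in> exp_vec p ` L"
      using maximiser_of_mem_convex_hull_maximisers[OF fin, of "exp_vec p g" a] that image by auto
    then show ?thesis
      by (simp add: inj_image_mem_iff[OF inj_exp_vec[OF p]])
  qed
  obtain g where "g \<in> compositions e" "g \<notin> L"
    using facet_exponent_set_subset_compositions[OF L] facet_exponent_set_proper[OF e d L] by blast
  then show "convex hull (exp_vec p ` L) \<noteq> convex hull ?V"
    using mem_L hull_inc[of "exp_vec p g" ?V] by auto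
qed

lemma facet_of_exponent_polytope:
  assumes p: "p \<ge> 2" and e: "e \<ge> 2" and d: "CARD('n::finite) \<ge> 3"
    and F: "F facet_of convex hull (exp_vec p ` compositions e :: (real^'n) set)"
  obtains L where "facet_exponent_set e L" "F = convex hull (exp_vec p ` L)"
proof -
  let ?V = "exp_vec p ` compositions e :: (real^'n) set"
  obtain a where "a \<noteq> 0" and F_eq: "F = convex hull (maximisers (inner a) ?V)"
    using facet_of_convex_hull_finite[OF finite_imageI[OF finite_compositions] F] by blast
  obtain L where L: "facet_exponent_set e L" "top_exponents p e a \<subseteq> L"
    using top_exponents_subset_facet_exponent_set[OF p e d \<open>a \<noteq> 0\<close>] by blast
  have "F \<subseteq> convex hull (exp_vec p ` L)"
    unfolding F_eq image_maximisers[of "exp_vec p" "inner a", symmetric]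
    using L(2) by (intro hull_mono image_mono)
  then have "F = convex hull (exp_vec p ` L)"
    using facet_of_subset_face_eq[OF _ F] facet_exponent_set_face(1,3)[OF p e d L(1)] by simp
  then show ?thesis
    using that L(1) by blast
qed

theorem facets_of_exponent_polytope:
  assumes p: "p \<ge> 2" and e: "e \<ge> 2" and d: "CARD('n::finite) \<ge> 3"
  shows "{F. F facet_of convex hull (exp_vec p ` compositions e :: (real^'n) set)} =
         {convex hull (exp_vec p ` L) | L. facet_exponent_set e (L :: ('n \<Rightarrow> nat) set)}"
proof (intro subset_antisym subsetI)
  let ?P = "convex hull (exp_vec p ` compositions e) :: (real^'n) set"
  fix F assume "F \<in> {F. F facet_of ?P}"
  then have "F facet_of ?P"
    by simp
  then obtain L where "facet_exponent_set e L" "F = convex hull (exp_vec p ` L)"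
    by (rule facet_of_exponent_polytope[OF p e d])
  then show "F \<in> {convex hull (exp_vec p ` L) | L. facet_exponent_set e L}"
    by blast
next
  let ?P = "convex hull (exp_vec p ` compositions e) :: (real^'n) set"
  fix G assume "G \<in> {convex hull (exp_vec p ` L) | L. facet_exponent_set e (L :: ('n \<Rightarrow> nat) set)}"
  then obtain L where L: "facet_exponent_set e L" and G: "G = convex hull (exp_vec p ` L)"
    by blast
  have "polyhedron ?P"
    by (intro polytope_imp_polyhedron polytope_convex_hull finite_imageI finite_compositions)
  moreover have "G face_of ?P" "G \<noteq> {}" "G \<noteq> ?P"
    unfolding G using facet_exponent_set_face(1-3)[OF p e d L] by simp_all
  ultimately obtain F where F: "F facet_of ?P" "G \<subseteq> F"
    by (rule face_of_polyhedron_subset_facet)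
  obtain L' where L': "facet_exponent_set e L'" "F = convex hull (exp_vec p ` L')"
    using F(1) by (rule facet_of_exponent_polytope[OF p e d])
  have "L \<subseteq> L'"
  proof
    fix g assume "g \<in> L"
    then have "g \<in> compositions e"
      using facet_exponent_set_subset_compositions[OF L] by blast
    moreover have "exp_vec p g \<in> G"
      unfolding G using \<open>g \<in> L\<close> by (intro hull_inc imageI)
    then have "exp_vec p g \<in> convex hull (exp_vec p ` L')"
      using F(2) L'(2) by blast
    ultimately show "g \<in> L'"
      by (rule facet_exponent_set_face(4)[OF p e d L'(1)])
  qed
  then have "G = F"
    using facet_exponent_set_subset_eq[OF e d L L'(1)] G L'(2) by simp
  then show "G \<in> {F. F facet_of ?P}"
    using F(1) by simp
qed

theorem theorem1p2:
  fixes p e :: nat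
  assumes "prime p" and "e \<ge> 2" and "CARD('n::finite) \<ge> 3"
  shows "{F. F facet_of (factorisation_polytope (p ^ e) :: (real^'n) set)} =
     {convex hull {(\<chi> j. if j = i then real (p ^ e) else 1) | i. True}}
     \<union> {convex hull {(\<chi> j. real p ^ \<beta> j) | \<beta> :: 'n \<Rightarrow> nat.
            \<beta> i = 0 \<and> (\<Sum>j\<in>UNIV. \<beta> j) = e} | i :: 'n. True}
     \<union> {convex hull {(\<chi> j. real p ^ (\<beta> j + \<epsilon> j)) | \<epsilon> :: 'n \<Rightarrow> nat.
            (\<forall>j. \<epsilon> j \<in> {0, 1}) \<and> (\<Sum>j\<in>UNIV. \<epsilon> j) = l}
        | l \<beta>. l \<in> {1 .. min e (CARD('n) - 1)} \<and>
            (\<chi> j. real p ^ \<beta> j) \<in> (vec_factorisations (p ^ (e - l)) :: (real^'n) set)}"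
proof -
  have polytope: "factorisation_polytope (p ^ e) = convex hull (exp_vec p ` compositions e :: (real^'n) set)"
    by (simp add: factorisation_polytope_def vec_factorisations_prime_power[OF assms(1)])
  have "exp_vec p (concentrated e i) = (\<chi> j. if j = i then real (p ^ e) else 1)" for i :: 'n
    by (simp add: exp_vec_def concentrated_def vec_eq_iff)
  then have vertices: "{(\<chi> j. if j = i then real (p ^ e) else 1) | i :: 'n. True}
      = exp_vec p ` vertex_exponents e"
    unfolding vertex_exponents_def image_image by (simp add: full_SetCompr_eq)
  have zero_faces: "{(\<chi> j. real p ^ \<beta> j) | \<beta>. \<beta> i = 0 \<and> (\<Sum>j\<in>UNIV. \<beta> j) = e}
      = exp_vec p ` zero_coordinate_exponents e i" for i :: 'n
    by (auto simp: zero_coordinate_exponents_def compositions_def exp_vec_def)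
  have layers: "{(\<chi> j. real p ^ (\<beta> j + \<epsilon> j)) | \<epsilon>. (\<forall>j. \<epsilon> j \<in> {0, 1}) \<and> (\<Sum>j\<in>UNIV. \<epsilon> j) = l}
      = exp_vec p ` layer_exponents l \<beta>" for l and \<beta> :: "'n \<Rightarrow> nat"
    by (auto simp: layer_exponents_def exp_vec_def)
  have families: "{convex hull (exp_vec p ` L) | L. facet_exponent_set e (L :: ('n \<Rightarrow> nat) set)} =
      {convex hull (exp_vec p ` vertex_exponents e)}
      \<union> {convex hull (exp_vec p ` zero_coordinate_exponents e i) | i :: 'n. True}
      \<union> {convex hull (exp_vec p ` layer_exponents l \<beta>) | l \<beta>.
          l \<in> {1 .. min e (CARD('n) - 1)} \<and> sum \<beta> UNIV = e - l}"
    unfolding facet_exponent_set_def by auto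
  show ?thesis
    unfolding polytope facets_of_exponent_polytope[OF prime_ge_2_nat[OF assms(1)] assms(2,3)]
      families vertices zero_faces layers power_vector_in_vec_factorisations_iff[OF assms(1)]
    by (rule refl)
qed

end
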